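(* Let $d \ge 3$ and $F \lneq F' \leq \mathrm{Sym}(\Omega)$ with $F'$ preserving each $F$-orbit in $\Omega$. Fix a vertex $v_0$ of $T_d$ and let $K(F,F')$ be the stabilizer of $v_0$ in $G(F,F')$. Then $K(F,F')$ is an ICC group, i.e. every non-trivial element of $K(F,F')$ has an infinite conjugacy class in $K(F,F')$.
   Context: $\Omega$ is a set with $|\Omega|=d$; $T_d$ is the $d$-regular tree with vertex set $V_d$ and a coloring $c$ of its edges by $\Omega$ which is bijective on the set $E(v)$ of edges at each vertex $v$; local permutations are $\sigma(g,v) = c|_{E(gv)}\circ g\circ (c|_{E(v)})^{-1}$. $G(F,F')$ is the group of automorphisms of $T_d$ whose local permutations all lie in $F'$ and all but finitely many lie in $F$. *)

theory Defs
  imports "HOL-Combinatorics.Permutations"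
begin

text \<open>Canonical model of the d-regular tree T_d with a legal edge colouring by Omega:
vertices are the reduced words over Omega (no two consecutive letters equal);
u and w are adjacent iff one is obtained from the other by appending one letter,
and the colour of that edge is the appended letter.\<close>

definition tree_verts :: "'a set \<Rightarrow> 'a list set" where
  "tree_verts \<Omega> = {w. set w \<subseteq> \<Omega> \<and> successively (\<noteq>) w}"

definition tree_adj :: "'a list \<Rightarrow> 'a list \<Rightarrow> bool" where
  "tree_adj u w \<longleftrightarrow> (\<exists>a. w = u @ [a]) \<or> (\<exists>a. u = w @ [a])"

definition edge_col :: "'a list \<Rightarrow> 'a list \<Rightarrow> 'a" where
  "edge_col u w = (if length u < length w then last w else last u)"

definition nbr :: "'a list \<Rightarrow> 'a \<Rightarrow> 'a list" where
  "nbr v a = (if v \<noteq> [] \<and> last v = a then butlast v else v @ [a])"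

definition tree_aut :: "'a set \<Rightarrow> ('a list \<Rightarrow> 'a list) set" where
  "tree_aut \<Omega> = {g. g permutes tree_verts \<Omega> \<and>
      (\<forall>u\<in>tree_verts \<Omega>. \<forall>w\<in>tree_verts \<Omega>. tree_adj (g u) (g w) \<longleftrightarrow> tree_adj u w)}"

text \<open>Local permutation sigma(g,v) = c|E(gv) o g o (c|E(v))^-1, extended by the identity
outside Omega.\<close>
definition local_perm :: "'a set \<Rightarrow> ('a list \<Rightarrow> 'a list) \<Rightarrow> 'a list \<Rightarrow> 'a \<Rightarrow> 'a" where
  "local_perm \<Omega> g v a = (if a \<in> \<Omega> then edge_col (g v) (g (nbr v a)) else a)"

definition perm_subgroup :: "'a set \<Rightarrow> ('a \<Rightarrow> 'a) set \<Rightarrow> bool" where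
  "perm_subgroup \<Omega> F \<longleftrightarrow> (\<forall>p\<in>F. p permutes \<Omega>) \<and> id \<in> F \<and>
      (\<forall>p\<in>F. \<forall>q\<in>F. p \<circ> q \<in> F) \<and> (\<forall>p\<in>F. inv p \<in> F)"

definition G_grp :: "'a set \<Rightarrow> ('a \<Rightarrow> 'a) set \<Rightarrow> ('a \<Rightarrow> 'a) set \<Rightarrow> ('a list \<Rightarrow> 'a list) set" where
  "G_grp \<Omega> F F' = {g \<in> tree_aut \<Omega>.
      (\<forall>v\<in>tree_verts \<Omega>. local_perm \<Omega> g v \<in> F') \<and>
      finite {v \<in> tree_verts \<Omega>. local_perm \<Omega> g v \<notin> F}}"

definition K_grp :: "'a set \<Rightarrow> ('a \<Rightarrow> 'a) set \<Rightarrow> ('a \<Rightarrow> 'a) set \<Rightarrow> 'a list \<Rightarrow> ('a list \<Rightarrow> 'a list) set" where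
  "K_grp \<Omega> F F' v0 = {g \<in> G_grp \<Omega> F F'. g v0 = v0}"

definition ICC :: "('b \<Rightarrow> 'b) set \<Rightarrow> bool" where
  "ICC H \<longleftrightarrow> (\<forall>k\<in>H. k \<noteq> id \<longrightarrow> infinite {h \<circ> k \<circ> inv h | h. h \<in> H})"

end

theory Submission
  imports Defs "HOL-Library.Sublist"
begin

text \<open>Let \<open>k \<noteq> 1\<close> in \<open>K(F,F')\<close> and call a vertex singular for an automorphism when its local
  permutation lies outside \<open>F\<close>; elements of \<open>G(F,F')\<close> have finitely many singular vertices, and so do
  their conjugates. Since \<open>d \<ge> 3\<close>, a moved vertex always has a moved child, so \<open>k\<close> moves
  infinitely many vertices \<open>u\<close> that are non-singular for \<open>k\<close> and farther from the root than \<open>v\<^sub>0\<close>.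
  For each such \<open>u\<close> there is \<open>h \<in> K(F,F')\<close> fixing \<open>u\<close> whose only singular vertex is \<open>u\<close>:
  it acts at \<open>u\<close> by some \<open>p \<in> F' - F\<close> fixing the colour towards the root, and on each branch
  below \<open>u\<close> by an element of \<open>F\<close> agreeing with \<open>p\<close> on the colour of that branch, which exists
  because \<open>F'\<close> preserves the \<open>F\<close>-orbits. Then \<open>u\<close> is singular for \<open>h k h\<^sup>-\<^sup>1\<close>, so infinitely many
  vertices are covered by the finite singular sets of the conjugates of \<open>k\<close>, and there must be
  infinitely many conjugates.\<close>

abbreviation V :: "'a set \<Rightarrow> 'a list set" where
  "V \<Omega> \<equiv> tree_verts \<Omega>"

lemma tree_verts_snoc_iff:
  "w @ [a] \<in> V \<Omega> \<longleftrightarrow> w \<in> V \<Omega> \<and> a \<in> \<Omega> \<and> (w = [] \<or> last w \<noteq> a)"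
  by (auto simp: tree_verts_def successively_append_iff)

lemma tree_verts_append_Cons_iff:
  "u @ b # y \<in> V \<Omega> \<longleftrightarrow>
     u \<in> V \<Omega> \<and> b \<in> \<Omega> \<and> set y \<subseteq> \<Omega> \<and> (u = [] \<or> last u \<noteq> b) \<and> successively (\<noteq>) (b # y)"
  by (auto simp: tree_verts_def successively_append_iff)

lemma tree_verts_butlast: "w \<in> V \<Omega> \<Longrightarrow> butlast w \<in> V \<Omega>"
  by (cases w rule: rev_cases) (auto simp: tree_verts_snoc_iff)

lemma nbr_in_tree_verts: "v \<in> V \<Omega> \<Longrightarrow> a \<in> \<Omega> \<Longrightarrow> nbr v a \<in> V \<Omega>"
  by (auto simp: nbr_def tree_verts_butlast tree_verts_snoc_iff)

lemma edge_col_nbr [simp]: "edge_col v (nbr v a) = a"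
  by (cases v rule: rev_cases) (auto simp: nbr_def edge_col_def)

lemma tree_adj_nbr: "tree_adj v (nbr v a)"
  by (cases v rule: rev_cases) (auto simp: nbr_def tree_adj_def)

lemma tree_adj_iff_nbr:
  assumes "v \<in> V \<Omega>" and "w \<in> V \<Omega>"
  shows "tree_adj v w \<longleftrightarrow> (\<exists>a\<in>\<Omega>. w = nbr v a)"
proof
  assume "tree_adj v w"
  then consider a where "w = v @ [a]" | a where "v = w @ [a]"
    by (auto simp: tree_adj_def)
  then show "\<exists>a\<in>\<Omega>. w = nbr v a"
  proof cases
    case (1 a)
    then show ?thesis using assms(2) by (auto simp: tree_verts_snoc_iff nbr_def)
  next
    case (2 a)
    then show ?thesis using assms(1) by (auto simp: tree_verts_snoc_iff nbr_def)
  qed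
qed (auto simp: tree_adj_nbr)

lemma nbr_append: "z \<noteq> [] \<Longrightarrow> nbr (u @ z) a = u @ nbr z a"
  by (simp add: nbr_def butlast_append)

lemma nbr_map: "inj \<pi> \<Longrightarrow> nbr (map \<pi> w) (\<pi> a) = map \<pi> (nbr w a)"
  by (cases w rule: rev_cases) (auto simp: nbr_def inj_eq)

lemma hd_nbr: "nbr z a \<noteq> [] \<Longrightarrow> z \<noteq> [] \<Longrightarrow> hd (nbr z a) = hd z"
  by (cases z rule: rev_cases) (auto simp: nbr_def hd_append)

subsection \<open>Automorphisms and local permutations\<close>

lemma tree_aut_permutes: "g \<in> tree_aut \<Omega> \<Longrightarrow> g permutes V \<Omega>"
  unfolding tree_aut_def by blast

lemma tree_aut_adj_iff:
  "g \<in> tree_aut \<Omega> \<Longrightarrow> u \<in> V \<Omega> \<Longrightarrow> w \<in> V \<Omega> \<Longrightarrow> tree_adj (g u) (g w) \<longleftrightarrow> tree_adj u w"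
  unfolding tree_aut_def by blast

lemma tree_autI:
  "g permutes V \<Omega> \<Longrightarrow> (\<And>u w. u \<in> V \<Omega> \<Longrightarrow> w \<in> V \<Omega> \<Longrightarrow> tree_adj (g u) (g w) \<longleftrightarrow> tree_adj u w)
    \<Longrightarrow> g \<in> tree_aut \<Omega>"
  unfolding tree_aut_def by blast

lemma tree_aut_in_verts_iff: "g \<in> tree_aut \<Omega> \<Longrightarrow> g v \<in> V \<Omega> \<longleftrightarrow> v \<in> V \<Omega>"
  by (rule permutes_in_image[OF tree_aut_permutes])

lemma tree_aut_nbr:
  assumes g: "g \<in> tree_aut \<Omega>" and v: "v \<in> V \<Omega>" and a: "a \<in> \<Omega>"
  shows "g (nbr v a) = nbr (g v) (local_perm \<Omega> g v a)" and "local_perm \<Omega> g v a \<in> \<Omega>"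
proof -
  have n: "nbr v a \<in> V \<Omega>" using v a by (rule nbr_in_tree_verts)
  then have "tree_adj (g v) (g (nbr v a))"
    using tree_aut_adj_iff[OF g v n] tree_adj_nbr by simp
  moreover have "g v \<in> V \<Omega>" and "g (nbr v a) \<in> V \<Omega>"
    using tree_aut_in_verts_iff[OF g] v n by simp_all
  ultimately obtain b where b: "b \<in> \<Omega>" "g (nbr v a) = nbr (g v) b"
    by (auto simp: tree_adj_iff_nbr)
  then have "local_perm \<Omega> g v a = b" using a by (simp add: local_perm_def)
  with b show "g (nbr v a) = nbr (g v) (local_perm \<Omega> g v a)" and "local_perm \<Omega> g v a \<in> \<Omega>"
    by simp_all
qed

lemma tree_aut_comp:
  assumes g: "g \<in> tree_aut \<Omega>" and k: "k \<in> tree_aut \<Omega>"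
  shows "g \<circ> k \<in> tree_aut \<Omega>"
proof (rule tree_autI)
  show "(g \<circ> k) permutes V \<Omega>"
    by (rule permutes_compose[OF tree_aut_permutes[OF k] tree_aut_permutes[OF g]])
next
  fix u w assume "u \<in> V \<Omega>" "w \<in> V \<Omega>"
  then show "tree_adj ((g \<circ> k) u) ((g \<circ> k) w) \<longleftrightarrow> tree_adj u w"
    using tree_aut_adj_iff[OF g] tree_aut_adj_iff[OF k] tree_aut_in_verts_iff[OF k] by simp
qed

lemma tree_aut_inv:
  assumes g: "g \<in> tree_aut \<Omega>"
  shows "inv g \<in> tree_aut \<Omega>"
proof (rule tree_autI)
  have p: "g permutes V \<Omega>" using g by (rule tree_aut_permutes)
  then show "inv g permutes V \<Omega>" by (rule permutes_inv)
  fix u w assume "u \<in> V \<Omega>" "w \<in> V \<Omega>"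
  then show "tree_adj (inv g u) (inv g w) \<longleftrightarrow> tree_adj u w"
    using tree_aut_adj_iff[OF g, of "inv g u" "inv g w"] permutes_in_image[OF permutes_inv[OF p]]
    by (simp add: permutes_inverses[OF p])
qed

lemma local_perm_id: "local_perm \<Omega> id v = id"
  by (auto simp: local_perm_def)

lemma local_perm_comp:
  assumes g: "g \<in> tree_aut \<Omega>" and k: "k \<in> tree_aut \<Omega>" and v: "v \<in> V \<Omega>"
  shows "local_perm \<Omega> (g \<circ> k) v = local_perm \<Omega> g (k v) \<circ> local_perm \<Omega> k v"
proof
  fix a show "local_perm \<Omega> (g \<circ> k) v a = (local_perm \<Omega> g (k v) \<circ> local_perm \<Omega> k v) a"
  proof (cases "a \<in> \<Omega>")
    case True
    then have "k (nbr v a) = nbr (k v) (local_perm \<Omega> k v a)" and "local_perm \<Omega> k v a \<in> \<Omega>"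
      using tree_aut_nbr[OF k v] by blast+
    with True show ?thesis by (simp add: local_perm_def)
  qed (simp add: local_perm_def)
qed

lemma local_perm_inverse:
  assumes g: "g \<in> tree_aut \<Omega>" and x: "x \<in> V \<Omega>"
  shows "local_perm \<Omega> g x \<circ> local_perm \<Omega> (inv g) (g x) = id"
    and "local_perm \<Omega> (inv g) (g x) \<circ> local_perm \<Omega> g x = id"
proof -
  have p: "g permutes V \<Omega>" using g by (rule tree_aut_permutes)
  have gx: "g x \<in> V \<Omega>" using x tree_aut_in_verts_iff[OF g] by simp
  have "local_perm \<Omega> g x \<circ> local_perm \<Omega> (inv g) (g x) = local_perm \<Omega> (g \<circ> inv g) (g x)"
    using local_perm_comp[OF g tree_aut_inv[OF g] gx] by (simp add: permutes_inverses[OF p])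
  then show "local_perm \<Omega> g x \<circ> local_perm \<Omega> (inv g) (g x) = id"
    by (simp only: permutes_inv_o[OF p] local_perm_id)
  have "local_perm \<Omega> (inv g) (g x) \<circ> local_perm \<Omega> g x = local_perm \<Omega> (inv g \<circ> g) x"
    using local_perm_comp[OF tree_aut_inv[OF g] g x] by simp
  then show "local_perm \<Omega> (inv g) (g x) \<circ> local_perm \<Omega> g x = id"
    by (simp only: permutes_inv_o[OF p] local_perm_id)
qed

lemma local_perm_permutes:
  assumes g: "g \<in> tree_aut \<Omega>" and x: "x \<in> V \<Omega>"
  shows "local_perm \<Omega> g x permutes \<Omega>"
proof -
  have "bij (local_perm \<Omega> g x)"
    by (rule o_bij[OF local_perm_inverse(2)[OF g x] local_perm_inverse(1)[OF g x]])
  then show ?thesis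
    unfolding permutes_def bij_iff by (simp add: local_perm_def)
qed

lemma local_perm_inv:
  assumes g: "g \<in> tree_aut \<Omega>" and v: "v \<in> V \<Omega>"
  shows "local_perm \<Omega> (inv g) v = inv (local_perm \<Omega> g (inv g v))"
proof -
  have "inv g v \<in> V \<Omega>" and "g (inv g v) = v"
    using v tree_aut_in_verts_iff[OF tree_aut_inv[OF g]] permutes_inverses[OF tree_aut_permutes[OF g]]
    by simp_all
  then show ?thesis
    using inv_unique_comp[OF local_perm_inverse[OF g, of "inv g v"]] by simp
qed

lemma local_perm_conj:
  assumes h: "h \<in> tree_aut \<Omega>" and k: "k \<in> tree_aut \<Omega>" and v: "v \<in> V \<Omega>"
  shows "local_perm \<Omega> (h \<circ> k \<circ> inv h) v =
    local_perm \<Omega> h (k (inv h v)) \<circ> local_perm \<Omega> k (inv h v) \<circ> inv (local_perm \<Omega> h (inv h v))"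
proof -
  have "local_perm \<Omega> (h \<circ> (k \<circ> inv h)) v =
      local_perm \<Omega> h (k (inv h v)) \<circ> (local_perm \<Omega> k (inv h v) \<circ> local_perm \<Omega> (inv h) v)"
    using local_perm_comp[OF h tree_aut_comp[OF k tree_aut_inv[OF h]] v]
      local_perm_comp[OF k tree_aut_inv[OF h] v] by simp
  then show ?thesis by (simp only: comp_assoc local_perm_inv[OF h v])
qed

lemma local_perm_eqI:
  assumes "q permutes \<Omega>" and "\<And>a. a \<in> \<Omega> \<Longrightarrow> h (nbr v a) = nbr (h v) (q a)"
  shows "local_perm \<Omega> h v = q"
proof
  fix a show "local_perm \<Omega> h v a = q a"
    using assms by (cases "a \<in> \<Omega>") (simp_all add: local_perm_def permutes_not_in)
qed

text \<open>Surjectivity onto the vertices follows by induction on the word length, extending preimages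
  one letter at a time.\<close>

lemma tree_aut_of_local_perms:
  assumes fixes_non_verts: "\<And>x. x \<notin> V \<Omega> \<Longrightarrow> h x = x"
    and maps_verts: "\<And>v. v \<in> V \<Omega> \<Longrightarrow> h v \<in> V \<Omega>"
    and inj: "inj_on h (V \<Omega>)" and root: "h [] = []"
    and q_perm: "\<And>v. v \<in> V \<Omega> \<Longrightarrow> q v permutes \<Omega>"
    and h_nbr: "\<And>v a. v \<in> V \<Omega> \<Longrightarrow> a \<in> \<Omega> \<Longrightarrow> h (nbr v a) = nbr (h v) (q v a)"
  shows "h \<in> tree_aut \<Omega>"
proof (rule tree_autI)
  have "w \<in> V \<Omega> \<longrightarrow> w \<in> h ` V \<Omega>" for w
  proof (induction w rule: rev_induct)
    case Nil
    have "[] \<in> V \<Omega>" by (simp add: tree_verts_def)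
    then show ?case using root by force
  next
    case (snoc a w)
    show ?case
    proof
      assume "w @ [a] \<in> V \<Omega>"
      then have w: "w \<in> V \<Omega>" and a: "a \<in> \<Omega>" and "w = [] \<or> last w \<noteq> a"
        by (simp_all add: tree_verts_snoc_iff)
      then have "nbr w a = w @ [a]" by (auto simp: nbr_def)
      obtain x where x: "x \<in> V \<Omega>" "w = h x" using snoc w by auto
      obtain b where b: "b \<in> \<Omega>" "q x b = a"
        using permutes_image[OF q_perm[OF x(1)]] a by (metis imageE)
      have "h (nbr x b) = w @ [a]"
        using h_nbr[OF x(1) b(1)] b(2) x(2) \<open>nbr w a = w @ [a]\<close> by simp
      then show "w @ [a] \<in> h ` V \<Omega>" using nbr_in_tree_verts[OF x(1) b(1)] by (metis image_eqI)
    qed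
  qed
  then have "bij_betw h (V \<Omega>) (V \<Omega>)"
    unfolding bij_betw_def using inj maps_verts by blast
  then show "h permutes V \<Omega>" using fixes_non_verts by (rule bij_imp_permutes)
next
  fix v w assume v: "v \<in> V \<Omega>" and w: "w \<in> V \<Omega>"
  have "(\<exists>a\<in>\<Omega>. h w = nbr (h v) a) \<longleftrightarrow> (\<exists>b\<in>\<Omega>. w = nbr v b)"
  proof
    assume "\<exists>a\<in>\<Omega>. h w = nbr (h v) a"
    then obtain a where a: "a \<in> \<Omega>" "h w = nbr (h v) a" by blast
    obtain b where b: "b \<in> \<Omega>" "q v b = a"
      using permutes_image[OF q_perm[OF v]] a(1) by (metis imageE)
    have "h w = h (nbr v b)" using h_nbr[OF v b(1)] a(2) b(2) by simp
    then have "w = nbr v b"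
      using inj w nbr_in_tree_verts[OF v b(1)] by (auto dest: inj_onD)
    then show "\<exists>b\<in>\<Omega>. w = nbr v b" using b(1) by blast
  next
    assume "\<exists>b\<in>\<Omega>. w = nbr v b"
    then obtain b where "b \<in> \<Omega>" "w = nbr v b" by blast
    then show "\<exists>a\<in>\<Omega>. h w = nbr (h v) a"
      using h_nbr[OF v] permutes_in_image[OF q_perm[OF v]] by blast
  qed
  then show "tree_adj (h v) (h w) \<longleftrightarrow> tree_adj v w"
    using tree_adj_iff_nbr[OF v w] tree_adj_iff_nbr[OF maps_verts[OF v] maps_verts[OF w]] by simp
qed

subsection \<open>Twisting the subtree below a vertex\<close>

text \<open>Below the vertex \<open>u\<close> every word \<open>u @ b # y\<close> is relabelled letterwise by \<open>f b\<close>; the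
  local permutation is then \<open>p\<close> at \<open>u\<close>, \<open>f b\<close> below \<open>u @ [b]\<close> and trivial elsewhere.
  Consistency at \<open>u @ [b]\<close> needs \<open>f b b = p b\<close>, and \<open>p\<close> must fix the colour of the edge
  from \<open>u\<close> to its parent.\<close>

context
  fixes \<Omega> :: "'a set" and u :: "'a list" and p :: "'a \<Rightarrow> 'a" and f :: "'a \<Rightarrow> 'a \<Rightarrow> 'a"
  assumes u_vert: "u \<in> V \<Omega>" and u_nonempty: "u \<noteq> []"
    and p_perm: "p permutes \<Omega>" and p_fixes_last: "p (last u) = last u"
    and f_perm: "\<And>b. b \<in> \<Omega> \<Longrightarrow> f b permutes \<Omega>" and f_diag: "\<And>b. b \<in> \<Omega> \<Longrightarrow> f b b = p b"
begin

definition twist :: "'a list \<Rightarrow> 'a list" where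
  "twist w = (if w \<in> V \<Omega> \<and> strict_prefix u w then u @ map (f (w ! length u)) (drop (length u) w) else w)"

definition twist_local :: "'a list \<Rightarrow> 'a \<Rightarrow> 'a" where
  "twist_local v = (if strict_prefix u v then f (v ! length u) else if v = u then p else id)"

lemma twist_below: "u @ b # y \<in> V \<Omega> \<Longrightarrow> twist (u @ b # y) = u @ map (f b) (b # y)"
  by (auto simp: twist_def strict_prefixI' nth_append_length)

lemma twist_fixes: "\<not> strict_prefix u w \<Longrightarrow> twist w = w"
  by (simp add: twist_def)

lemma twist_non_vert: "w \<notin> V \<Omega> \<Longrightarrow> twist w = w"
  by (simp add: twist_def)

lemma twist_short: "length w \<le> length u \<Longrightarrow> twist w = w"
  using prefix_length_less by (fastforce intro: twist_fixes)

lemma twist_below_in_verts: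
  assumes "u @ b # y \<in> V \<Omega>"
  shows "u @ map (f b) (b # y) \<in> V \<Omega>"
proof -
  from assms u_nonempty have b: "b \<in> \<Omega>" and y: "set y \<subseteq> \<Omega>" and "last u \<noteq> b"
    and chain: "successively (\<noteq>) (b # y)"
    by (auto simp: tree_verts_append_Cons_iff)
  have "inj (f b)" using f_perm[OF b] by (rule permutes_inj)
  have "p b \<noteq> last u"
    using \<open>last u \<noteq> b\<close> p_fixes_last permutes_inj[OF p_perm] by (metis injD)
  moreover have "successively (\<noteq>) (map (f b) (b # y))"
    unfolding successively_map using chain by (rule successively_mono) (use \<open>inj (f b)\<close> in \<open>simp add: inj_eq\<close>)
  moreover have "set (map (f b) (b # y)) \<subseteq> \<Omega>"
    using b y permutes_in_image[OF f_perm[OF b]] by auto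
  ultimately show ?thesis
    using u_vert f_diag[OF b] by (simp add: tree_verts_append_Cons_iff)
qed

lemma twist_in_verts:
  assumes "w \<in> V \<Omega>"
  shows "twist w \<in> V \<Omega>"
proof (cases "strict_prefix u w")
  case True
  then obtain b y where "w = u @ b # y" by (auto elim!: strict_prefixE')
  with assms show ?thesis using twist_below_in_verts by (simp add: twist_below del: list.map)
qed (simp add: assms twist_fixes)

lemma twist_inj: "inj_on twist (V \<Omega>)"
proof (rule inj_onI)
  fix x w assume x: "x \<in> V \<Omega>" and w: "w \<in> V \<Omega>" and eq: "twist x = twist w"
  have below_twist: "strict_prefix u (twist v)" if "strict_prefix u v" "v \<in> V \<Omega>" for v
    using that by (auto elim!: strict_prefixE' simp: twist_below intro: strict_prefixI')
  consider "strict_prefix u x" "strict_prefix u w" | "\<not> strict_prefix u x" "\<not> strict_prefix u w"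
    | "strict_prefix u x \<noteq> strict_prefix u w" by blast
  then show "x = w"
  proof cases
    case 1
    then obtain b y c z where xb: "x = u @ b # y" and wc: "w = u @ c # z" by (auto elim!: strict_prefixE')
    have b: "b \<in> \<Omega>" and c: "c \<in> \<Omega>" using x w xb wc by (simp_all add: tree_verts_append_Cons_iff)
    from eq have "f b b = f c c" and images: "map (f b) y = map (f c) z"
      using x w xb wc by (simp_all add: twist_below)
    then have "p b = p c" using f_diag b c by simp
    then have "b = c" using permutes_inj[OF p_perm] by (metis injD)
    moreover have "inj (f b)" using f_perm[OF b] by (rule permutes_inj)
    ultimately have "y = z" using images by (simp add: inj_map_eq_map)
    then show ?thesis using xb wc \<open>b = c\<close> by simp
  next
    case 2
    then show ?thesis using eq by (simp add: twist_fixes)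
  next
    case 3
    then show ?thesis using eq x w below_twist twist_fixes by metis
  qed
qed

lemma twist_local_permutes: "twist_local v permutes \<Omega>" if "v \<in> V \<Omega>"
proof (cases "strict_prefix u v")
  case True
  then obtain b y where "v = u @ b # y" by (auto elim!: strict_prefixE')
  with that True show ?thesis by (simp add: twist_local_def nth_append_length tree_verts_append_Cons_iff f_perm)
qed (simp_all add: twist_local_def p_perm permutes_id)

lemma twist_nbr:
  assumes v: "v \<in> V \<Omega>" and a: "a \<in> \<Omega>"
  shows "twist (nbr v a) = nbr (twist v) (twist_local v a)"
proof -
  have nv: "nbr v a \<in> V \<Omega>" using v a by (rule nbr_in_tree_verts)
  consider "strict_prefix u v" | "v = u" | "\<not> prefix u v"
    using strict_prefixI by blast
  then show ?thesis
  proof cases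
    case 1
    then obtain b y where vb: "v = u @ b # y" by (auto elim!: strict_prefixE')
    let ?\<pi> = "f b"
    have "b \<in> \<Omega>" using v vb by (simp add: tree_verts_append_Cons_iff)
    then have "inj ?\<pi>" using f_perm by (blast intro: permutes_inj)
    have nbr_v: "nbr v a = u @ nbr (b # y) a" using vb by (simp add: nbr_append)
    have "twist (nbr v a) = u @ map ?\<pi> (nbr (b # y) a)"
    proof (cases "nbr (b # y) a")
      case Nil then show ?thesis using nbr_v by (simp add: twist_short)
    next
      case (Cons c z)
      then have "c = b" using hd_nbr[of "b # y" a] by simp
      then show ?thesis using nbr_v nv Cons by (simp add: twist_below)
    qed
    also have "\<dots> = nbr (u @ map ?\<pi> (b # y)) (?\<pi> a)"
      by (simp add: nbr_map[OF \<open>inj ?\<pi>\<close>] nbr_append del: list.map)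
    also have "\<dots> = nbr (twist v) (twist_local v a)"
      using v vb by (simp add: twist_below twist_local_def strict_prefixI' nth_append_length del: list.map)
    finally show ?thesis .
  next
    case 2
    show ?thesis
    proof (cases "a = last u")
      case True
      then have "nbr u a = butlast u" using u_nonempty by (simp add: nbr_def)
      moreover have "twist (butlast u) = butlast u" by (simp add: twist_short)
      ultimately show ?thesis using 2 True p_fixes_last by (simp add: twist_short twist_local_def)
    next
      case False
      have "p a \<noteq> last u" using False p_fixes_last permutes_inj[OF p_perm] by (metis injD)
      moreover have "u @ [a] \<in> V \<Omega>" using u_vert a False by (simp add: tree_verts_snoc_iff)
      ultimately show ?thesis
        using 2 False twist_below[of a "[]"] f_diag[OF a] by (simp add: nbr_def twist_short twist_local_def)
    qed
  next
    case 3
    have "\<not> strict_prefix u (nbr v a)"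
    proof
      assume "strict_prefix u (nbr v a)"
      then have "prefix u (nbr v a)" and "u \<noteq> nbr v a" by (auto elim: strict_prefixE)
      then have "prefix u v"
        using prefix_order.trans[OF _ prefixeq_butlast] by (auto simp: nbr_def split: if_splits)
      with 3 show False by contradiction
    qed
    moreover have "\<not> strict_prefix u v" and "v \<noteq> u" using 3 by (auto elim: strict_prefixE)
    ultimately show ?thesis by (simp add: twist_fixes twist_local_def)
  qed
qed

lemma twist_tree_aut: "twist \<in> tree_aut \<Omega>"
  by (rule tree_aut_of_local_perms[where q = twist_local])
    (simp_all add: twist_non_vert twist_in_verts twist_inj twist_short twist_local_permutes twist_nbr)

lemma local_perm_twist: "v \<in> V \<Omega> \<Longrightarrow> local_perm \<Omega> twist v = twist_local v"
  by (rule local_perm_eqI) (simp_all add: twist_local_permutes twist_nbr)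

lemma local_perm_twist_self: "local_perm \<Omega> twist u = p"
  using local_perm_twist[OF u_vert] by (simp add: twist_local_def)

lemma local_perm_twist_other:
  assumes "v \<in> V \<Omega>" and "v \<noteq> u"
  shows "local_perm \<Omega> twist v \<in> insert id (f ` \<Omega>)"
proof (cases "strict_prefix u v")
  case True
  then obtain b y where "v = u @ b # y" by (auto elim!: strict_prefixE')
  with assms True show ?thesis
    by (simp add: local_perm_twist twist_local_def nth_append_length tree_verts_append_Cons_iff)
qed (use assms in \<open>simp add: local_perm_twist twist_local_def\<close>)

end

lemma tree_adj_common_nbr:
  assumes "tree_adj z (w @ [a])" and "tree_adj z (w @ [b])" and "a \<noteq> b"
  shows "z = w"
  using assms by (auto simp: tree_adj_def)

lemma tree_aut_moves_child:
  assumes g: "g \<in> tree_aut \<Omega>" and fin: "finite \<Omega>" and three: "card \<Omega> \<ge> 3"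
    and w: "w \<in> V \<Omega>" and moved: "g w \<noteq> w"
  shows "\<exists>a. w @ [a] \<in> V \<Omega> \<and> g (w @ [a]) \<noteq> w @ [a]"
proof (rule ccontr)
  assume fixed: "\<not> ?thesis"
  let ?C = "\<Omega> - {last w}"
  have "card ?C \<ge> 2" using three fin by (auto simp: card_Diff_singleton_if)
  then obtain a where a: "a \<in> ?C" by (metis all_not_in_conv card.empty not_numeral_le_zero)
  have "card (?C - {a}) \<ge> 1" using \<open>card ?C \<ge> 2\<close> a fin by (simp add: card_Diff_singleton_if)
  then obtain b where b: "b \<in> ?C - {a}" by (metis all_not_in_conv card.empty not_one_le_zero)
  have adj_child: "tree_adj (g w) (w @ [c])" if "c \<in> ?C" for c
  proof -
    have wc: "w @ [c] \<in> V \<Omega>" using that w by (auto simp: tree_verts_snoc_iff)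
    then have "g (w @ [c]) = w @ [c]" using fixed by blast
    moreover have "tree_adj w (w @ [c])" by (simp add: tree_adj_def)
    ultimately show ?thesis using tree_aut_adj_iff[OF g w wc] by simp
  qed
  have "g w = w"
    using tree_adj_common_nbr[OF adj_child[OF a] adj_child[of b]] b by blast
  with moved show False by contradiction
qed

lemma infinite_moved_verts:
  assumes g: "g \<in> tree_aut \<Omega>" and fin: "finite \<Omega>" and three: "card \<Omega> \<ge> 3" and nontriv: "g \<noteq> id"
  shows "infinite {w \<in> V \<Omega>. g w \<noteq> w}" (is "infinite ?M")
proof
  obtain x where x: "g x \<noteq> x" using nontriv by (metis eq_id_iff)
  then have "x \<in> V \<Omega>" using permutes_not_in[OF tree_aut_permutes[OF g]] by blast
  have long: "\<exists>w \<in> ?M. n \<le> length w" for n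
  proof (induction n)
    case 0
    show ?case using \<open>x \<in> V \<Omega>\<close> x by blast
  next
    case (Suc n)
    then obtain w where "w \<in> V \<Omega>" "g w \<noteq> w" "n \<le> length w" by blast
    moreover obtain a where "w @ [a] \<in> V \<Omega>" "g (w @ [a]) \<noteq> w @ [a]"
      using tree_aut_moves_child[OF g fin three \<open>w \<in> V \<Omega>\<close> \<open>g w \<noteq> w\<close>] by blast
    ultimately show ?case by (intro bexI[of _ "w @ [a]"]) simp_all
  qed
  assume "finite ?M"
  then have "length w \<le> Max (length ` ?M)" if "w \<in> ?M" for w
    using that by (simp del: mem_Collect_eq)
  with long[of "Suc (Max (length ` ?M))"] show False by fastforce
qed

lemma perm_subgroup_permutes: "perm_subgroup \<Omega> F \<Longrightarrow> p \<in> F \<Longrightarrow> p permutes \<Omega>"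
  unfolding perm_subgroup_def by blast

lemma perm_subgroup_id: "perm_subgroup \<Omega> F \<Longrightarrow> id \<in> F"
  unfolding perm_subgroup_def by blast

lemma perm_subgroup_comp: "perm_subgroup \<Omega> F \<Longrightarrow> p \<in> F \<Longrightarrow> q \<in> F \<Longrightarrow> p \<circ> q \<in> F"
  unfolding perm_subgroup_def by blast

lemma perm_subgroup_inv: "perm_subgroup \<Omega> F \<Longrightarrow> p \<in> F \<Longrightarrow> inv p \<in> F"
  unfolding perm_subgroup_def by blast

lemma perm_subgroup_comp_left_iff:
  assumes F: "perm_subgroup \<Omega> F" and p: "p \<in> F"
  shows "p \<circ> q \<in> F \<longleftrightarrow> q \<in> F"
proof
  have "inv p \<circ> p = id" by (rule permutes_inv_o(2)[OF perm_subgroup_permutes[OF F p]])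
  then have "q = inv p \<circ> (p \<circ> q)" by (simp add: comp_assoc[symmetric])
  moreover assume "p \<circ> q \<in> F"
  ultimately show "q \<in> F" by (metis perm_subgroup_comp perm_subgroup_inv F p)
qed (rule perm_subgroup_comp[OF F p])

lemma perm_subgroup_inv_iff:
  assumes F: "perm_subgroup \<Omega> F" and p: "p permutes \<Omega>"
  shows "inv p \<in> F \<longleftrightarrow> p \<in> F"
  using perm_subgroup_inv[OF F] inv_inv_eq[OF permutes_bij[OF p]] by metis

lemma exists_stabilizer_outside_subgroup:
  assumes F: "perm_subgroup \<Omega> F" and F': "perm_subgroup \<Omega> F'" and proper: "F \<subset> F'"
    and orbits: "\<forall>p\<in>F'. \<forall>x\<in>\<Omega>. \<exists>f\<in>F. f x = p x" and c: "c \<in> \<Omega>"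
  shows "\<exists>p\<in>F'. p \<notin> F \<and> p c = c"
proof -
  obtain p0 where p0: "p0 \<in> F'" "p0 \<notin> F" using proper by blast
  then obtain f0 where f0: "f0 \<in> F" "f0 c = p0 c" using orbits c by blast
  have f0_perm: "f0 permutes \<Omega>" by (rule perm_subgroup_permutes[OF F f0(1)])
  define p where "p = inv f0 \<circ> p0"
  have "f0 \<circ> p = p0"
    unfolding p_def using permutes_inv_o(1)[OF f0_perm] by (simp add: comp_assoc[symmetric])
  then have "p \<notin> F" using perm_subgroup_comp_left_iff[OF F f0(1), of p] p0(2) by simp
  moreover have "p \<in> F'"
    unfolding p_def using f0(1) proper by (blast intro: perm_subgroup_comp[OF F'] perm_subgroup_inv[OF F'] p0(1))
  moreover have "p c = c"
    unfolding p_def using f0(2) permutes_inverses(2)[OF f0_perm] by (metis comp_apply)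
  ultimately show ?thesis by blast
qed

subsection \<open>Singular vertices\<close>

definition singular_verts :: "'a set \<Rightarrow> ('a \<Rightarrow> 'a) set \<Rightarrow> ('a list \<Rightarrow> 'a list) \<Rightarrow> 'a list set" where
  "singular_verts \<Omega> F g = {v \<in> V \<Omega>. local_perm \<Omega> g v \<notin> F}"

lemma singular_verts_conj_subset:
  assumes F: "perm_subgroup \<Omega> F" and h: "h \<in> tree_aut \<Omega>" and k: "k \<in> tree_aut \<Omega>"
  shows "singular_verts \<Omega> F (h \<circ> k \<circ> inv h) \<subseteq>
    h ` (singular_verts \<Omega> F k \<union> singular_verts \<Omega> F h \<union> inv k ` singular_verts \<Omega> F h)"
proof
  fix v assume "v \<in> singular_verts \<Omega> F (h \<circ> k \<circ> inv h)"
  then have v: "v \<in> V \<Omega>" and sing: "local_perm \<Omega> (h \<circ> k \<circ> inv h) v \<notin> F"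
    by (simp_all add: singular_verts_def)
  define x where "x = inv h v"
  have x: "x \<in> V \<Omega>" and "v = h x"
    using v tree_aut_in_verts_iff[OF tree_aut_inv[OF h]] permutes_inverses(1)[OF tree_aut_permutes[OF h]]
    by (simp_all add: x_def)
  have kx: "k x \<in> V \<Omega>" and "inv k (k x) = x"
    using x tree_aut_in_verts_iff[OF k] permutes_inverses(2)[OF tree_aut_permutes[OF k]] by simp_all
  have "x \<in> singular_verts \<Omega> F k \<union> singular_verts \<Omega> F h \<union> inv k ` singular_verts \<Omega> F h"
  proof (rule ccontr)
    assume "\<not> ?thesis"
    then have "local_perm \<Omega> k x \<in> F" and "local_perm \<Omega> h x \<in> F" and "local_perm \<Omega> h (k x) \<in> F"
      using x kx \<open>inv k (k x) = x\<close> unfolding singular_verts_def by (auto simp: image_iff)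
    then have "local_perm \<Omega> (h \<circ> k \<circ> inv h) v \<in> F"
      using local_perm_conj[OF h k v] perm_subgroup_inv_iff[OF F local_perm_permutes[OF h x]]
      by (simp add: x_def[symmetric] perm_subgroup_comp[OF F])
    with sing show False by contradiction
  qed
  then show "v \<in> h ` (singular_verts \<Omega> F k \<union> singular_verts \<Omega> F h \<union> inv k ` singular_verts \<Omega> F h)"
    using \<open>v = h x\<close> by blast
qed

lemma finite_singular_verts_conj:
  assumes "perm_subgroup \<Omega> F" and "h \<in> tree_aut \<Omega>" and "k \<in> tree_aut \<Omega>"
    and "finite (singular_verts \<Omega> F h)" and "finite (singular_verts \<Omega> F k)"
  shows "finite (singular_verts \<Omega> F (h \<circ> k \<circ> inv h))"
  using finite_subset[OF singular_verts_conj_subset[OF assms(1-3)]] assms(4,5) by simp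

lemma mem_singular_verts_conj:
  assumes F: "perm_subgroup \<Omega> F" and h: "h \<in> tree_aut \<Omega>" and k: "k \<in> tree_aut \<Omega>"
    and u: "u \<in> V \<Omega>" and hu: "h u = u"
    and "u \<in> singular_verts \<Omega> F h" and "k u \<notin> singular_verts \<Omega> F h" and "u \<notin> singular_verts \<Omega> F k"
  shows "u \<in> singular_verts \<Omega> F (h \<circ> k \<circ> inv h)"
proof -
  have "inv h u = u" using hu permutes_inv_eq[OF tree_aut_permutes[OF h]] by simp
  have "k u \<in> V \<Omega>" using u tree_aut_in_verts_iff[OF k] by simp
  with assms have "local_perm \<Omega> h (k u) \<in> F" and "local_perm \<Omega> k u \<in> F" and "local_perm \<Omega> h u \<notin> F"
    by (simp_all add: singular_verts_def)
  then have "local_perm \<Omega> (h \<circ> k \<circ> inv h) u \<notin> F"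
    using local_perm_conj[OF h k u] perm_subgroup_inv_iff[OF F local_perm_permutes[OF h u]]
      perm_subgroup_comp_left_iff[OF F] \<open>inv h u = u\<close>
    by (simp add: comp_assoc)
  with u show ?thesis by (simp add: singular_verts_def)
qed

lemma K_grpD:
  assumes "h \<in> K_grp \<Omega> F F' v0"
  shows "h \<in> tree_aut \<Omega>" and "finite (singular_verts \<Omega> F h)"
  using assms by (simp_all add: K_grp_def G_grp_def singular_verts_def)

lemma exists_K_grp_singular_verts_eq:
  assumes F: "perm_subgroup \<Omega> F" and F': "perm_subgroup \<Omega> F'" and proper: "F \<subset> F'"
    and orbits: "\<forall>p\<in>F'. \<forall>x\<in>\<Omega>. \<exists>f\<in>F. f x = p x"
    and u: "u \<in> V \<Omega>" and deep: "length v0 < length u"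
  shows "\<exists>h \<in> K_grp \<Omega> F F' v0. h u = u \<and> singular_verts \<Omega> F h = {u}"
proof -
  have "u \<noteq> []" using deep by auto
  then have "last u \<in> \<Omega>" using u by (auto simp: tree_verts_def)
  then obtain p where p: "p \<in> F'" "p \<notin> F" "p (last u) = last u"
    by (metis exists_stabilizer_outside_subgroup[OF F F' proper orbits])
  have p_perm: "p permutes \<Omega>" by (rule perm_subgroup_permutes[OF F' p(1)])
  have "\<forall>b\<in>\<Omega>. \<exists>g. g \<in> F \<and> g b = p b" using orbits p(1) by blast
  then obtain f where f: "\<And>b. b \<in> \<Omega> \<Longrightarrow> f b \<in> F \<and> f b b = p b"
    by (metis bchoice)
  have f_perm: "f b permutes \<Omega>" if "b \<in> \<Omega>" for b
    using perm_subgroup_permutes[OF F] f[OF that] by blast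
  note twist_hyps = u \<open>u \<noteq> []\<close> p_perm p(3) f_perm conjunct2[OF f]
  define h where "h = twist \<Omega> u f"
  have h_aut: "h \<in> tree_aut \<Omega>" unfolding h_def by (rule twist_tree_aut[OF twist_hyps])
  have lp_u: "local_perm \<Omega> h u = p" unfolding h_def by (rule local_perm_twist_self[OF twist_hyps])
  have lp_other: "local_perm \<Omega> h v \<in> F" if "v \<in> V \<Omega>" "v \<noteq> u" for v
    using local_perm_twist_other[OF twist_hyps that] perm_subgroup_id[OF F] f by (auto simp: h_def)
  have sing: "singular_verts \<Omega> F h = {u}"
    using u lp_u p(2) lp_other by (auto simp: singular_verts_def)
  have "local_perm \<Omega> h v \<in> F'" if "v \<in> V \<Omega>" for v
    using that lp_u p(1) lp_other proper by (cases "v = u") auto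
  moreover have "h v0 = v0" and "h u = u"
    using deep twist_short[OF twist_hyps] by (simp_all add: h_def)
  ultimately show ?thesis
    using h_aut sing by (auto simp: K_grp_def G_grp_def singular_verts_def)
qed

lemma finite_singular_verts_K_grp_conj:
  assumes "perm_subgroup \<Omega> F" and "h \<in> K_grp \<Omega> F F' v0" and "k \<in> K_grp \<Omega> F F' v0"
  shows "finite (singular_verts \<Omega> F (h \<circ> k \<circ> inv h))"
  using finite_singular_verts_conj[OF assms(1)] K_grpD[OF assms(2)] K_grpD[OF assms(3)] by blast

lemma exists_K_grp_conj_singular_at:
  assumes F: "perm_subgroup \<Omega> F" and "perm_subgroup \<Omega> F'" and "F \<subset> F'"
    and "\<forall>p\<in>F'. \<forall>x\<in>\<Omega>. \<exists>f\<in>F. f x = p x"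
    and k: "k \<in> K_grp \<Omega> F F' v0" and u: "u \<in> V \<Omega>" and "k u \<noteq> u" and "u \<notin> singular_verts \<Omega> F k"
    and "length v0 < length u"
  shows "\<exists>h \<in> K_grp \<Omega> F F' v0. u \<in> singular_verts \<Omega> F (h \<circ> k \<circ> inv h)"
proof -
  obtain h where h: "h \<in> K_grp \<Omega> F F' v0" "h u = u" "singular_verts \<Omega> F h = {u}"
    using exists_K_grp_singular_verts_eq[OF assms(1-4) u] \<open>length v0 < length u\<close> by blast
  then have "u \<in> singular_verts \<Omega> F (h \<circ> k \<circ> inv h)"
    using mem_singular_verts_conj[OF F K_grpD(1)[OF h(1)] K_grpD(1)[OF k] u] assms(7,8) by simp
  with h(1) show ?thesis by blast
qed

theorem proposition3:
  fixes \<Omega> :: "'a set" and F F' :: "('a \<Rightarrow> 'a) set" and v0 :: "'a list"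
  assumes "finite \<Omega>" and "card \<Omega> \<ge> 3"
    and "perm_subgroup \<Omega> F" and "perm_subgroup \<Omega> F'" and "F \<subset> F'"
    and "\<forall>p\<in>F'. \<forall>x\<in>\<Omega>. \<exists>f\<in>F. f x = p x"
    and "v0 \<in> tree_verts \<Omega>"
  shows "ICC (K_grp \<Omega> F F' v0)"
  unfolding ICC_def
proof (intro ballI impI)
  let ?K = "K_grp \<Omega> F F' v0" and ?S = "singular_verts \<Omega> F"
  fix k assume k: "k \<in> ?K" and "k \<noteq> id"
  let ?C = "{h \<circ> k \<circ> inv h | h. h \<in> ?K}"
  let ?U = "{w \<in> V \<Omega>. k w \<noteq> w} - ?S k - {w. set w \<subseteq> \<Omega> \<and> length w \<le> length v0}"
  have "infinite ?U"
    using infinite_moved_verts[OF K_grpD(1)[OF k] assms(1,2) \<open>k \<noteq> id\<close>] K_grpD(2)[OF k]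
      finite_lists_length_le[OF assms(1)]
    by (simp add: Diff_infinite_finite)
  moreover have "?U \<subseteq> \<Union> (?S ` ?C)"
  proof
    fix u assume "u \<in> ?U"
    then have "u \<in> V \<Omega>" "k u \<noteq> u" "u \<notin> ?S k" "length v0 < length u"
      by (auto simp: tree_verts_def)
    then obtain h where "h \<in> ?K" and "u \<in> ?S (h \<circ> k \<circ> inv h)"
      using exists_K_grp_conj_singular_at[OF assms(3-6) k] by blast
    then show "u \<in> \<Union> (?S ` ?C)" by blast
  qed
  moreover have "finite (?S c)" if "c \<in> ?C" for c
    using that finite_singular_verts_K_grp_conj[OF assms(3) _ k] by blast
  ultimately show "infinite ?C"
    by (meson finite_UN_I finite_subset)
qed

end
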